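(* Let $P_0>0$, $\sigma>0$, $t>0$, $0<\mathbb{P}_l<\mathbb{P}_u$, $0<\mathbb{S}_l<\mathbb{S}_u$. Suppose $P_t=P_0\exp(\sigma W_t-\sigma^2t/2)$ for a standard Brownian motion $W$ (geometric Brownian motion with volatility $\sigma$ and zero drift, i.e. zero risk-free rate under the risk-neutral measure). With $\mathrm{UIL}^{\mathtt{R}}$ and $\mathrm{UIL}^{\mathtt{L}}$ defined as in the context, $$\mathbb{E}[\mathrm{UIL}^{\mathtt{R}}]=2\sqrt{P_0}e^{-\sigma^2t/8}\big(N(d_l+\sigma\sqrt t/2)-N(d_u+\sigma\sqrt t/2)\big)-\sqrt{\mathbb{P}_l}N(d_l)+\sqrt{\mathbb{P}_u}N(d_u)-\tfrac{P_0}{\sqrt{\mathbb{P}_l}}N(d_l+\sigma\sqrt t)+\tfrac{P_0}{\sqrt{\mathbb{P}_u}}N(d_u+\sigma\sqrt t),$$ $$\mathbb{E}[\mathrm{UIL}^{\mathtt{L}}]=2\sqrt{P_0}e^{-\sigma^2t/8}\big(-N(-q_l-\sigma\sqrt t/2)+N(-q_u-\sigma\sqrt t/2)\big)+\sqrt{\mathbb{S}_l}N(-q_l)-\sqrt{\mathbb{S}_u}N(-q_u)+\tfrac{P_0}{\sqrt{\mathbb{S}_l}}N(-q_l-\sigma\sqrt t)-\tfrac{P_0}{\sqrt{\mathbb{S}_u}}N(-q_u-\sigma\sqrt t),$$ where $N$ is the standard normal CDF and $d_u=\frac{\ln(P_0/\mathbb{P}_u)-\sigma^2t/2}{\sigma\sqrt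 t}$, $d_l=\frac{\ln(P_0/\mathbb{P}_l)-\sigma^2t/2}{\sigma\sqrt t}$, $q_u=\frac{\ln(P_0/\mathbb{S}_u)-\sigma^2t/2}{\sigma\sqrt t}$, $q_l=\frac{\ln(P_0/\mathbb{S}_l)-\sigma^2t/2}{\sigma\sqrt t}$.
   Context: Unit impermanent losses per liquidity for a price $P_t>0$: $\mathrm{UIL}^{\mathtt{R}}=\big(2\sqrt{P_t}-\tfrac{P_t}{\sqrt{\mathbb{P}_l}}-\sqrt{\mathbb{P}_l}\big)\mathbf{1}_{\{\mathbb{P}_l\le P_t\le \mathbb{P}_u\}}+\big(\sqrt{\mathbb{P}_u}-\sqrt{\mathbb{P}_l}-(\tfrac{1}{\sqrt{\mathbb{P}_l}}-\tfrac{1}{\sqrt{\mathbb{P}_u}})P_t\big)\mathbf{1}_{\{P_t\ge \mathbb{P}_u\}}$ (liquidity supplied on $[\mathbb{P}_l,\mathbb{P}_u]$ to the right of the initial price), and $\mathrm{UIL}^{\mathtt{L}}=\big(2\sqrt{P_t}-\tfrac{P_t}{\sqrt{\mathbb{S}_u}}-\sqrt{\mathbb{S}_u}\big)\mathbf{1}_{\{\mathbb{S}_l\le P_t\le \mathbb{S}_u\}}+\big((\tfrac{1}{\sqrt{\mathbb{S}_l}}-\tfrac{1}{\sqrt{\mathbb{S}_u}})P_t-\sqrt{\mathbb{S}_u}+\sqrt{\mathbb{S}_l}\big)\mathbf{1}_{\{P_t\le \mathbb{S}_l\}}$ (liquidity supplied on $[\mathbb{S}_l,\mathbb{S}_u]$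 to the left of the initial price). The expectation $\mathbb{E}$ is taken with respect to the law of $P_t$ specified in the claim. *)

theory Defs
  imports "HOL-Probability.Probability"
begin

definition std_normal_cdf :: "real \<Rightarrow> real" where
  "std_normal_cdf x = measure (density lborel std_normal_density) {..x}"

text \<open>Unit impermanent loss, liquidity on [Pl, Pu] to the right of the initial price.\<close>
definition UIL_R :: "real \<Rightarrow> real \<Rightarrow> real \<Rightarrow> real" where
  "UIL_R Pl Pu p =
     (2 * sqrt p - p / sqrt Pl - sqrt Pl) * indicator {Pl..Pu} p
   + (sqrt Pu - sqrt Pl - (1 / sqrt Pl - 1 / sqrt Pu) * p) * indicator {Pu..} p"

text \<open>Unit impermanent loss, liquidity on [Sl, Su] to the left of the initial price.\<close>
definition UIL_L :: "real \<Rightarrow> real \<Rightarrow> real \<Rightarrow> real" where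
  "UIL_L Sl Su p =
     (2 * sqrt p - p / sqrt Su - sqrt Su) * indicator {Sl..Su} p
   + ((1 / sqrt Sl - 1 / sqrt Su) * p - sqrt Su + sqrt Sl) * indicator {..Sl} p"

end

theory Submission
  imports Defs
begin

text \<open>
  With \<open>s = \<sigma> \<surd>t\<close> and \<open>Z = W\<^sub>t / \<surd>t\<close> standard normal, the price is
  \<open>P\<^sub>t = P\<^sub>0 exp (s Z - s\<^sup>2/2)\<close>. Away from a single price of probability zero, each unit
  impermanent loss is a linear combination of the one-sided truncated moments
  \<open>E[P\<^sub>t\<^sup>a; P\<^sub>t \<ge> K]\<close> and \<open>E[P\<^sub>t\<^sup>a; P\<^sub>t \<le> K]\<close> with \<open>a \<in> {0, 1/2, 1}\<close>. Since
  \<open>P\<^sub>t\<^sup>a\<close> is a multiple of \<open>exp (a s Z)\<close>, completing the square shifts the Gaussian by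
  \<open>a s\<close> and gives \<open>P\<^sub>0\<^sup>a exp (a (a - 1) s\<^sup>2/2) N(\<plusminus>(d\<^sub>2 + a s))\<close> with the
  Black-Scholes \<open>d\<^sub>2 = (ln (P\<^sub>0/K) - s\<^sup>2/2) / s\<close>; the case \<open>a = 1/2\<close> is where the
  factor \<open>\<surd>P\<^sub>0 exp (- \<sigma>\<^sup>2 t / 8)\<close> comes from.
\<close>

lemma has_bochner_integral_std_normal_cdf:
  "has_bochner_integral lborel (\<lambda>z. std_normal_density z * indicator {..x} z) (std_normal_cdf x)"
proof -
  have int: "integrable lborel (\<lambda>z. std_normal_density z * indicator {..x} z)"
    by (intro integrable_real_mult_indicator) auto
  have "emeasure (density lborel std_normal_density) {..x}
          = (\<integral>\<^sup>+z. ennreal (std_normal_density z * indicator {..x} z) \<partial>lborel)"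
    by (subst emeasure_density) (auto intro!: nn_integral_cong simp: indicator_def)
  also have "\<dots> = ennreal (\<integral>z. std_normal_density z * indicator {..x} z \<partial>lborel)"
    using int by (intro nn_integral_eq_integral) auto
  finally have "std_normal_cdf x = (\<integral>z. std_normal_density z * indicator {..x} z \<partial>lborel)"
    unfolding std_normal_cdf_def measure_def by (simp add: integral_nonneg_AE)
  with int show ?thesis
    by (simp add: has_bochner_integral_integrable)
qed

lemma std_normal_density_mult_exp:
  "std_normal_density z * exp (b * z) = exp (b\<^sup>2 / 2) * std_normal_density (z - b)"
proof -
  have "- z\<^sup>2 / 2 + b * z = b\<^sup>2 / 2 + - (z - b)\<^sup>2 / 2"
    by (simp add: power2_eq_square field_simps)
  then have "exp (- z\<^sup>2 / 2) * exp (b * z) = exp (b\<^sup>2 / 2) * exp (- (z - b)\<^sup>2 / 2)"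
    by (simp only: mult_exp_exp)
  then show ?thesis
    unfolding std_normal_density_def by simp
qed

lemma has_bochner_integral_std_normal_exp_atMost:
  "has_bochner_integral lborel (\<lambda>z. std_normal_density z * (exp (b * z) * indicator {..c} z))
     (exp (b\<^sup>2 / 2) * std_normal_cdf (c - b))"
proof -
  have "has_bochner_integral lborel (\<lambda>z. std_normal_density z * indicator {..c - b} z)
          (std_normal_cdf (c - b))"
    by (rule has_bochner_integral_std_normal_cdf)
  then have "has_bochner_integral lborel
      (\<lambda>x. (\<lambda>z. std_normal_density (z - b) * indicator {..c} z) (b + 1 * x)) (std_normal_cdf (c - b))"
    by (rule has_bochner_integral_cong[THEN iffD1, rotated -1]) (auto simp: indicator_def)
  then have "has_bochner_integral lborel (\<lambda>z. std_normal_density (z - b) * indicator {..c} z)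
               (std_normal_cdf (c - b))"
    using lborel_has_bochner_integral_real_affine_iff[of 1
        "\<lambda>z. std_normal_density (z - b) * indicator {..c} z" _ b]
    by simp
  then show ?thesis
    by (subst has_bochner_integral_cong[OF refl _ refl, where g =
          "\<lambda>z. exp (b\<^sup>2 / 2) * (std_normal_density (z - b) * indicator {..c} z)"])
       (auto simp: std_normal_density_mult_exp intro: has_bochner_integral_mult_right)
qed

lemma has_bochner_integral_std_normal_exp_atLeast:
  "has_bochner_integral lborel (\<lambda>z. std_normal_density z * (exp (b * z) * indicator {c..} z))
     (exp (b\<^sup>2 / 2) * std_normal_cdf (b - c))"
proof -
  have "has_bochner_integral lborel
      (\<lambda>z. std_normal_density z * (exp ((- b) * z) * indicator {..- c} z))
      (exp ((- b)\<^sup>2 / 2) * std_normal_cdf (- c - (- b)))"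
    by (rule has_bochner_integral_std_normal_exp_atMost)
  then have "has_bochner_integral lborel
      (\<lambda>x. (\<lambda>z. std_normal_density z * (exp (b * z) * indicator {c..} z)) (0 + (- 1) * x))
      (exp (b\<^sup>2 / 2) * std_normal_cdf (b - c) /\<^sub>R \<bar>- 1\<bar>)"
    by (rule has_bochner_integral_cong[THEN iffD1, rotated -1])
       (auto simp: indicator_def std_normal_density_def)
  then show ?thesis
    using lborel_has_bochner_integral_real_affine_iff[of "- 1"
        "\<lambda>z. std_normal_density z * (exp (b * z) * indicator {c..} z)" _ 0]
    by simp
qed

definition lognormal_price :: "real \<Rightarrow> real \<Rightarrow> real \<Rightarrow> real" where
  "lognormal_price P0 s z = P0 * exp (s * z - s\<^sup>2 / 2)"

definition black_scholes_d2 :: "real \<Rightarrow> real \<Rightarrow> real \<Rightarrow> real" where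
  "black_scholes_d2 P0 K s = (ln (P0 / K) - s\<^sup>2 / 2) / s"

lemma lognormal_price_measurable [measurable]: "lognormal_price P0 s \<in> borel_measurable borel"
  unfolding lognormal_price_def by measurable

lemma lognormal_price_pos: "P0 > 0 \<Longrightarrow> lognormal_price P0 s z > 0"
  by (simp add: lognormal_price_def)

lemma ln_lognormal_price:
  "P0 > 0 \<Longrightarrow> ln (lognormal_price P0 s z) = ln P0 + s * z - s\<^sup>2 / 2"
  by (simp add: lognormal_price_def ln_mult)

lemma minus_black_scholes_d2:
  "0 < P0 \<Longrightarrow> 0 < K \<Longrightarrow> - black_scholes_d2 P0 K s = (ln K - ln P0 + s\<^sup>2 / 2) / s"
  unfolding black_scholes_d2_def minus_divide_left by (simp add: ln_div)

lemma le_lognormal_price_iff: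
  assumes "0 < P0" "0 < K" "0 < s"
  shows "K \<le> lognormal_price P0 s z \<longleftrightarrow> - black_scholes_d2 P0 K s \<le> z"
proof -
  have "K \<le> lognormal_price P0 s z \<longleftrightarrow> ln K \<le> ln P0 + s * z - s\<^sup>2 / 2"
    using assms by (simp flip: ln_lognormal_price add: lognormal_price_pos)
  also have "\<dots> \<longleftrightarrow> (ln K - ln P0 + s\<^sup>2 / 2) / s \<le> z"
    using assms by (simp add: pos_divide_le_eq mult.commute) arith
  finally show ?thesis
    using assms by (simp add: minus_black_scholes_d2)
qed

lemma lognormal_price_le_iff:
  assumes "0 < P0" "0 < K" "0 < s"
  shows "lognormal_price P0 s z \<le> K \<longleftrightarrow> z \<le> - black_scholes_d2 P0 K s"
proof -
  have "lognormal_price P0 s z \<le> K \<longleftrightarrow> ln P0 + s * z - s\<^sup>2 / 2 \<le> ln K"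
    using assms by (simp flip: ln_lognormal_price add: lognormal_price_pos)
  also have "\<dots> \<longleftrightarrow> z \<le> (ln K - ln P0 + s\<^sup>2 / 2) / s"
    using assms by (simp add: pos_le_divide_eq mult.commute) arith
  finally show ?thesis
    using assms by (simp add: minus_black_scholes_d2)
qed

lemma lognormal_price_powr:
  "P0 > 0 \<Longrightarrow>
     lognormal_price P0 s z powr a = P0 powr a * exp (- a * s\<^sup>2 / 2) * exp (a * s * z)"
  using lognormal_price_pos[of P0 s z]
  by (simp add: powr_def ln_lognormal_price field_simps flip: exp_add)

lemma exp_lognormal_moment:
  fixes a s :: real
  shows "exp (- a * s\<^sup>2 / 2) * exp ((a * s)\<^sup>2 / 2) = exp (a * (a - 1) * s\<^sup>2 / 2)"
  by (simp add: power_mult_distrib power2_eq_square field_simps flip: exp_add)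

lemma has_bochner_integral_lognormal_powr_atLeast:
  assumes "0 < P0" "0 < K" "0 < s"
  shows "has_bochner_integral lborel
    (\<lambda>z. std_normal_density z *
       (lognormal_price P0 s z powr a * indicator {K..} (lognormal_price P0 s z)))
    (P0 powr a * exp (a * (a - 1) * s\<^sup>2 / 2) * std_normal_cdf (black_scholes_d2 P0 K s + a * s))"
proof -
  let ?d = "black_scholes_d2 P0 K s" and ?C = "P0 powr a * exp (- a * s\<^sup>2 / 2)"
  have int: "has_bochner_integral lborel
    (\<lambda>z. ?C * (std_normal_density z * (exp ((a * s) * z) * indicator {- ?d..} z)))
    (?C * (exp ((a * s)\<^sup>2 / 2) * std_normal_cdf (a * s - - ?d)))"
    by (intro has_bochner_integral_mult_right has_bochner_integral_std_normal_exp_atLeast)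
  have "indicator {K..} (lognormal_price P0 s z) = (indicator {- ?d..} z :: real)" for z
    using le_lognormal_price_iff[OF assms] by (simp add: indicator_def)
  then have integrand: "std_normal_density z *
      (lognormal_price P0 s z powr a * indicator {K..} (lognormal_price P0 s z))
    = ?C * (std_normal_density z * (exp ((a * s) * z) * indicator {- ?d..} z))" for z
    by (simp add: lognormal_price_powr[OF assms(1)] mult_ac)
  have moment: "?C * (exp ((a * s)\<^sup>2 / 2) * std_normal_cdf (a * s - - ?d))
      = P0 powr a * exp (a * (a - 1) * s\<^sup>2 / 2) * std_normal_cdf (?d + a * s)"
    unfolding exp_lognormal_moment[symmetric] by (simp add: mult_ac add.commute)
  show ?thesis
    unfolding integrand moment[symmetric] by (fact int)
qed

lemma has_bochner_integral_lognormal_powr_atMost: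
  assumes "0 < P0" "0 < K" "0 < s"
  shows "has_bochner_integral lborel
    (\<lambda>z. std_normal_density z *
       (lognormal_price P0 s z powr a * indicator {..K} (lognormal_price P0 s z)))
    (P0 powr a * exp (a * (a - 1) * s\<^sup>2 / 2) * std_normal_cdf (- black_scholes_d2 P0 K s - a * s))"
proof -
  let ?d = "black_scholes_d2 P0 K s" and ?C = "P0 powr a * exp (- a * s\<^sup>2 / 2)"
  have int: "has_bochner_integral lborel
    (\<lambda>z. ?C * (std_normal_density z * (exp ((a * s) * z) * indicator {..- ?d} z)))
    (?C * (exp ((a * s)\<^sup>2 / 2) * std_normal_cdf (- ?d - a * s)))"
    by (intro has_bochner_integral_mult_right has_bochner_integral_std_normal_exp_atMost)
  have "indicator {..K} (lognormal_price P0 s z) = (indicator {..- ?d} z :: real)" for z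
    using lognormal_price_le_iff[OF assms] by (simp add: indicator_def)
  then have integrand: "std_normal_density z *
      (lognormal_price P0 s z powr a * indicator {..K} (lognormal_price P0 s z))
    = ?C * (std_normal_density z * (exp ((a * s) * z) * indicator {..- ?d} z))" for z
    by (simp add: lognormal_price_powr[OF assms(1)] mult_ac)
  have moment: "?C * (exp ((a * s)\<^sup>2 / 2) * std_normal_cdf (- ?d - a * s))
      = P0 powr a * exp (a * (a - 1) * s\<^sup>2 / 2) * std_normal_cdf (- ?d - a * s)"
    unfolding exp_lognormal_moment[symmetric] by (simp add: mult_ac)
  show ?thesis
    unfolding integrand moment[symmetric] by (fact int)
qed

lemma AE_lognormal_price_neq:
  assumes "0 < P0" "0 < K" "0 < s"
  shows "AE z in lborel. lognormal_price P0 s z \<noteq> K"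
  using AE_lborel_singleton[of "- black_scholes_d2 P0 K s"]
  by eventually_elim
     (use le_lognormal_price_iff[OF assms] lognormal_price_le_iff[OF assms] in force)

text \<open>
  At \<open>p = Pu\<close> (resp. \<open>p = Sl\<close>) both indicators of the definition are 1, so the piece
  is counted twice there; elsewhere the loss splits into two one-sided tail payoffs.
\<close>

lemma UIL_R_eq_tails:
  assumes "Pl \<le> Pu" "p \<noteq> Pu"
  shows "UIL_R Pl Pu p = (2 * sqrt p - p / sqrt Pl - sqrt Pl) * indicator {Pl..} p
                        + (sqrt Pu - 2 * sqrt p + p / sqrt Pu) * indicator {Pu..} p"
  using assms by (auto simp: UIL_R_def indicator_def algebra_simps)

lemma UIL_L_eq_tails:
  assumes "Sl \<le> Su" "p \<noteq> Sl"
  shows "UIL_L Sl Su p = (2 * sqrt p - p / sqrt Su - sqrt Su) * indicator {..Su} p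
                        + (p / sqrt Sl + sqrt Sl - 2 * sqrt p) * indicator {..Sl} p"
  using assms by (auto simp: UIL_L_def indicator_def algebra_simps)

lemma UIL_R_measurable [measurable]: "UIL_R Pl Pu \<in> borel_measurable borel"
  unfolding UIL_R_def by measurable

lemma UIL_L_measurable [measurable]: "UIL_L Sl Su \<in> borel_measurable borel"
  unfolding UIL_L_def by measurable

lemma has_bochner_integral_UIL_R_lognormal:
  assumes "0 < P0" "0 < s" "0 < Pl" "Pl \<le> Pu"
  defines "dl \<equiv> black_scholes_d2 P0 Pl s" and "du \<equiv> black_scholes_d2 P0 Pu s"
  shows "has_bochner_integral lborel
    (\<lambda>z. std_normal_density z * UIL_R Pl Pu (lognormal_price P0 s z))
    (2 * sqrt P0 * exp (- s\<^sup>2 / 8) * (std_normal_cdf (dl + s / 2) - std_normal_cdf (du + s / 2))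
     - sqrt Pl * std_normal_cdf dl + sqrt Pu * std_normal_cdf du
     - P0 / sqrt Pl * std_normal_cdf (dl + s) + P0 / sqrt Pu * std_normal_cdf (du + s))"
proof -
  let ?X = "lognormal_price P0 s"
  define tail where "tail a K z = std_normal_density z * (?X z powr a * indicator {K..} (?X z))"
    for a K z
  let ?combination = "\<lambda>z. 2 * tail (1/2) Pl z - (1 / sqrt Pl) * tail 1 Pl z - sqrt Pl * tail 0 Pl z
       + sqrt Pu * tail 0 Pu z - 2 * tail (1/2) Pu z + (1 / sqrt Pu) * tail 1 Pu z"
  have "Pu > 0" using assms by linarith
  note moments =
    has_bochner_integral_lognormal_powr_atLeast[OF assms(1,3,2), folded tail_def dl_def]
    has_bochner_integral_lognormal_powr_atLeast[OF assms(1) \<open>Pu > 0\<close> assms(2), folded tail_def du_def]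
  have combination: "has_bochner_integral lborel ?combination
    (2 * sqrt P0 * exp (- s\<^sup>2 / 8) * (std_normal_cdf (dl + s / 2) - std_normal_cdf (du + s / 2))
     - sqrt Pl * std_normal_cdf dl + sqrt Pu * std_normal_cdf du
     - P0 / sqrt Pl * std_normal_cdf (dl + s) + P0 / sqrt Pu * std_normal_cdf (du + s))"
    by (rule back_subst[of "has_bochner_integral lborel ?combination"],
        (rule has_bochner_integral_add has_bochner_integral_diff
          has_bochner_integral_mult_right moments)+)
       (use assms in \<open>simp add: powr_half_sqrt algebra_simps\<close>)
  have "AE z in lborel. std_normal_density z * UIL_R Pl Pu (?X z) = ?combination z"
    using AE_lognormal_price_neq[OF assms(1) \<open>Pu > 0\<close> assms(2)]
  proof eventually_elim
    case (elim z)
    then show ?case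
      using lognormal_price_pos[OF assms(1), of s z] assms(4)
      by (simp add: tail_def UIL_R_eq_tails powr_half_sqrt algebra_simps)
  qed
  with combination show ?thesis
    by (subst has_bochner_integral_cong_AE) (auto simp: tail_def)
qed

lemma has_bochner_integral_UIL_L_lognormal:
  assumes "0 < P0" "0 < s" "0 < Sl" "Sl \<le> Su"
  defines "ql \<equiv> black_scholes_d2 P0 Sl s" and "qu \<equiv> black_scholes_d2 P0 Su s"
  shows "has_bochner_integral lborel
    (\<lambda>z. std_normal_density z * UIL_L Sl Su (lognormal_price P0 s z))
    (2 * sqrt P0 * exp (- s\<^sup>2 / 8)
       * (- std_normal_cdf (- ql - s / 2) + std_normal_cdf (- qu - s / 2))
     + sqrt Sl * std_normal_cdf (- ql) - sqrt Su * std_normal_cdf (- qu)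
     + P0 / sqrt Sl * std_normal_cdf (- ql - s) - P0 / sqrt Su * std_normal_cdf (- qu - s))"
proof -
  let ?X = "lognormal_price P0 s"
  define tail where "tail a K z = std_normal_density z * (?X z powr a * indicator {..K} (?X z))"
    for a K z
  let ?combination = "\<lambda>z. 2 * tail (1/2) Su z - (1 / sqrt Su) * tail 1 Su z - sqrt Su * tail 0 Su z
       + (1 / sqrt Sl) * tail 1 Sl z + sqrt Sl * tail 0 Sl z - 2 * tail (1/2) Sl z"
  have "Su > 0" using assms by linarith
  note moments =
    has_bochner_integral_lognormal_powr_atMost[OF assms(1,3,2), folded tail_def ql_def]
    has_bochner_integral_lognormal_powr_atMost[OF assms(1) \<open>Su > 0\<close> assms(2), folded tail_def qu_def]
  have combination: "has_bochner_integral lborel ?combination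
    (2 * sqrt P0 * exp (- s\<^sup>2 / 8)
       * (- std_normal_cdf (- ql - s / 2) + std_normal_cdf (- qu - s / 2))
     + sqrt Sl * std_normal_cdf (- ql) - sqrt Su * std_normal_cdf (- qu)
     + P0 / sqrt Sl * std_normal_cdf (- ql - s) - P0 / sqrt Su * std_normal_cdf (- qu - s))"
    by (rule back_subst[of "has_bochner_integral lborel ?combination"],
        (rule has_bochner_integral_add has_bochner_integral_diff
          has_bochner_integral_mult_right moments)+)
       (use assms in \<open>simp add: powr_half_sqrt algebra_simps\<close>)
  have "AE z in lborel. std_normal_density z * UIL_L Sl Su (?X z) = ?combination z"
    using AE_lognormal_price_neq[OF assms(1,3,2)]
  proof eventually_elim
    case (elim z)
    then show ?case
      using lognormal_price_pos[OF assms(1), of s z] assms(4)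
      by (simp add: tail_def UIL_L_eq_tails powr_half_sqrt algebra_simps)
  qed
  with combination show ?thesis
    by (subst has_bochner_integral_cong_AE) (auto simp: tail_def)
qed

theorem corollary1:
  fixes M :: "'a measure" and W :: "'a \<Rightarrow> real"
    and P0 \<sigma> t Pl Pu Sl Su :: real
  assumes "prob_space M"
    and "distributed M lborel W (normal_density 0 (sqrt t))"
    and "P0 > 0" and "\<sigma> > 0" and "t > 0"
    and "0 < Pl" and "Pl < Pu" and "0 < Sl" and "Sl < Su"
  defines "Pt \<equiv> (\<lambda>\<omega>. P0 * exp (\<sigma> * W \<omega> - \<sigma>\<^sup>2 * t / 2))"
    and "du \<equiv> (ln (P0 / Pu) - \<sigma>\<^sup>2 * t / 2) / (\<sigma> * sqrt t)"
    and "dl \<equiv> (ln (P0 / Pl) - \<sigma>\<^sup>2 * t / 2) / (\<sigma> * sqrt t)"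
    and "qu \<equiv> (ln (P0 / Su) - \<sigma>\<^sup>2 * t / 2) / (\<sigma> * sqrt t)"
    and "ql \<equiv> (ln (P0 / Sl) - \<sigma>\<^sup>2 * t / 2) / (\<sigma> * sqrt t)"
  shows "(prob_space.expectation M (\<lambda>\<omega>. UIL_R Pl Pu (Pt \<omega>)) =
           2 * sqrt P0 * exp (- \<sigma>\<^sup>2 * t / 8)
             * (std_normal_cdf (dl + \<sigma> * sqrt t / 2) - std_normal_cdf (du + \<sigma> * sqrt t / 2))
           - sqrt Pl * std_normal_cdf dl + sqrt Pu * std_normal_cdf du
           - P0 / sqrt Pl * std_normal_cdf (dl + \<sigma> * sqrt t)
           + P0 / sqrt Pu * std_normal_cdf (du + \<sigma> * sqrt t))
    \<and> (prob_space.expectation M (\<lambda>\<omega>. UIL_L Sl Su (Pt \<omega>)) =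
           2 * sqrt P0 * exp (- \<sigma>\<^sup>2 * t / 8)
             * (- std_normal_cdf (- ql - \<sigma> * sqrt t / 2) + std_normal_cdf (- qu - \<sigma> * sqrt t / 2))
           + sqrt Sl * std_normal_cdf (- ql) - sqrt Su * std_normal_cdf (- qu)
           + P0 / sqrt Sl * std_normal_cdf (- ql - \<sigma> * sqrt t)
           - P0 / sqrt Su * std_normal_cdf (- qu - \<sigma> * sqrt t))"
proof -
  interpret prob_space M by fact
  define s where "s = \<sigma> * sqrt t"
  have "s > 0" using assms by (simp add: s_def)
  have s2: "s\<^sup>2 = \<sigma>\<^sup>2 * t" using assms by (simp add: s_def power_mult_distrib)
  have Z: "distributed M lborel (\<lambda>\<omega>. W \<omega> / sqrt t) std_normal_density"
    using assms(2) normal_standard_normal_convert[of "sqrt t" W 0] assms(5) by simp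
  have Pt: "Pt = (\<lambda>\<omega>. lognormal_price P0 s (W \<omega> / sqrt t))"
    using assms(5) by (simp add: Pt_def lognormal_price_def s_def power_mult_distrib)
  have expectation: "expectation (\<lambda>\<omega>. f (Pt \<omega>))
      = (\<integral>z. std_normal_density z * f (lognormal_price P0 s z) \<partial>lborel)"
    if "f \<in> borel_measurable borel" for f
    using distributed_integral[OF Z, of "\<lambda>z. f (lognormal_price P0 s z)"] that by (simp add: Pt)
  have d2: "du = black_scholes_d2 P0 Pu s" "dl = black_scholes_d2 P0 Pl s"
      "qu = black_scholes_d2 P0 Su s" "ql = black_scholes_d2 P0 Sl s"
    unfolding du_def dl_def qu_def ql_def black_scholes_d2_def s_def[symmetric] s2[symmetric]
    by simp_all
  have "exp (- \<sigma>\<^sup>2 * t / 8) = exp (- s\<^sup>2 / 8)" by (simp add: s2)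
  then show ?thesis
    unfolding expectation[OF UIL_R_measurable] expectation[OF UIL_L_measurable] d2 s_def[symmetric]
    using has_bochner_integral_UIL_R_lognormal[OF \<open>P0 > 0\<close> \<open>s > 0\<close> \<open>0 < Pl\<close>, of Pu]
      has_bochner_integral_UIL_L_lognormal[OF \<open>P0 > 0\<close> \<open>s > 0\<close> \<open>0 < Sl\<close>, of Su]
      \<open>Pl < Pu\<close> \<open>Sl < Su\<close>
    by (simp add: has_bochner_integral_integral_eq)
qed

end
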